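(* Let $R$ be a weakly bleached local ring and let $s=\sum_{i=1}^{\infty}s_ix^i\in R[[x]]$ be central in $R[[x]]$ with $s\in J\big(R[[x]]\big)$. Let $s_0$ denote the constant term of $s$. For $A(x)\in M_2\big(R[[x]];s\big)$ the following are equivalent: (1) $A(x)$ is strongly $J$-clean in $M_2\big(R[[x]];s\big)$; (2) $A(0)$ is strongly $J$-clean in $M_2(R;s_0)$.
   Context: All rings are associative with identity. A ring $R$ is local if $R/J(R)$ is a division ring, where $J(R)$ is the Jacobson radical. A local ring $R$ is weakly bleached if for any $a\in J(R)$ and any $b\in 1+J(R)$ the additive maps $R\to R$, $r\mapsto br-ra$ and $r\mapsto ar-rb$, are both surjective. $R[[x]]$ is the formal power series ring; for a matrix $A(x)$ over $R[[x]]$, $A(0)$ is obtained by taking constant terms of all entries. For a ring $T$ and a central element $s\in T$, $M_2(T;s)$ denotes the ring whose elements are the $2\times 2$ arrays $\left[\begin{smallmatrix} a&b\\ c&d\end{smallmatrix}\right]$ with $a,b,c,d\in T$, with componentwise addition and multiplication $\left[\begin{smallmatrix} a&b\\ c&d\end{smallmatrix}\right]\left[\begin{smallmatrix} a'&b'\\ c'&d'\end{smallmatrix}\right]=\left[\begin{smallmatrix} aa'+s^2bc'&ab'+bd'\\ ca'+dc'&s^2cb'+dd'\end{smallmatrix}\right]$. An element $a$ of a ring $T$ is strongly $J$-clean if there is an idempotent $e\in T$ with $ae=ea$ and $a-e\in J(T)$. *)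

theory Defs
  imports "HOL-Computational_Algebra.Formal_Power_Series"
begin

definition jac_gen :: "('m \<Rightarrow> 'm \<Rightarrow> 'm) \<Rightarrow> ('m \<Rightarrow> 'm \<Rightarrow> 'm) \<Rightarrow> 'm \<Rightarrow> 'm set" where
  "jac_gen sub mul one = {a. \<forall>r. \<exists>u. mul u (sub one (mul r a)) = one}"

definition strongly_J_clean_gen ::
  "('m \<Rightarrow> 'm \<Rightarrow> 'm) \<Rightarrow> ('m \<Rightarrow> 'm \<Rightarrow> 'm) \<Rightarrow> 'm \<Rightarrow> 'm \<Rightarrow> bool" where
  "strongly_J_clean_gen sub mul one a \<longleftrightarrow>
     (\<exists>e. mul e e = e \<and> mul a e = mul e a \<and> sub a e \<in> jac_gen sub mul one)"

definition jac :: "'a::ring_1 set" where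
  "jac = jac_gen (-) (*) 1"

text \<open>R/J(R) is a division ring: it is nonzero (1 not in J) and every class outside J
  (i.e. every nonzero class) has a two-sided inverse modulo J.\<close>
definition local_ring :: "'a::ring_1 itself \<Rightarrow> bool" where
  "local_ring _ \<longleftrightarrow> (1::'a) \<notin> jac \<and>
     (\<forall>a::'a. a \<notin> jac \<longrightarrow> (\<exists>b. a * b - 1 \<in> jac \<and> b * a - 1 \<in> jac))"

definition weakly_bleached :: "'a::ring_1 itself \<Rightarrow> bool" where
  "weakly_bleached T \<longleftrightarrow> local_ring T \<and>
     (\<forall>a b::'a. a \<in> jac \<longrightarrow> b - 1 \<in> jac \<longrightarrow>
        surj (\<lambda>r. b * r - r * a) \<and> surj (\<lambda>r. a * r - r * b))"

text \<open>An element (a,b,c,d) represents the array [a b; c d].\<close>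
type_synonym 'a m2 = "'a \<times> 'a \<times> 'a \<times> 'a"

definition m2_sub :: "'a::ring_1 m2 \<Rightarrow> 'a m2 \<Rightarrow> 'a m2" where
  "m2_sub X Y = (case X of (a,b,c,d) \<Rightarrow> case Y of (a',b',c',d') \<Rightarrow>
      (a - a', b - b', c - c', d - d'))"

definition m2_mul :: "'a::ring_1 \<Rightarrow> 'a m2 \<Rightarrow> 'a m2 \<Rightarrow> 'a m2" where
  "m2_mul s X Y = (case X of (a,b,c,d) \<Rightarrow> case Y of (a',b',c',d') \<Rightarrow>
      (a * a' + s^2 * b * c', a * b' + b * d', c * a' + d * c', s^2 * c * b' + d * d'))"

definition m2_one :: "'a::ring_1 m2" where
  "m2_one = (1, 0, 0, 1)"

definition strongly_J_clean_m2 :: "'a::ring_1 \<Rightarrow> 'a m2 \<Rightarrow> bool" where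
  "strongly_J_clean_m2 s A = strongly_J_clean_gen m2_sub (m2_mul s) m2_one A"

definition m2_at0 :: "'a::ring_1 fps m2 \<Rightarrow> 'a m2" where
  "m2_at0 A = (case A of (a,b,c,d) \<Rightarrow> (fps_nth a 0, fps_nth b 0, fps_nth c 0, fps_nth d 0))"

end

theory Submission
  imports Defs
begin

text \<open>Taking constant terms is a surjective homomorphism from M_2(R[[x]]; s) onto M_2(R; 0)
  that maps the radical into the radical, which gives (1) \<Longrightarrow> (2). Conversely, since s_0 = 0,
  a matrix over R[[x]] whose diagonal entries have constant terms in J(R) is in the radical
  (it is left invertible modulo every multiple by row reduction). The diagonal entries of an
  idempotent of M_2(R; 0) are idempotents of the local ring R, hence 0 or 1, so it suffices to
  find an idempotent over R[[x]] commuting with A with prescribed diagonal entries 0 or 1 at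
  x = 0. Up to swapping the two indices the only nontrivial case is (1, 0): there A is conjugated
  into diagonal form by solving a Riccati equation and then a Sylvester equation over R[[x]],
  each coefficient by coefficient, using that r \<mapsto> r a - b r is surjective for a \<in> 1 + J(R),
  b \<in> J(R).\<close>

unbundle fps_syntax

lemma in_jac_iff: "x \<in> (jac::'a::ring_1 set) \<longleftrightarrow> (\<forall>r. \<exists>u. u * (1 - r * x) = 1)"
  by (simp add: jac_def jac_gen_def)

lemma local_ring_idempotent_cases:
  fixes e :: "'a::ring_1"
  assumes "local_ring TYPE('a)" and idem: "e * e = e"
  shows "e = 0 \<or> e = 1"
proof (cases "e \<in> jac")
  case True
  then obtain u where u: "u * (1 - e) = 1" by (metis in_jac_iff mult_1)
  have "(1 - e) * (1 - e) = 1 - e" using idem by (simp add: algebra_simps)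
  then have "u * (1 - e) * (1 - e) = u * (1 - e)" by (simp add: mult.assoc)
  then show ?thesis using u by simp
next
  case False
  then obtain b where "b * e - 1 \<in> jac"
    using assms(1) unfolding local_ring_def by blast
  then obtain u where "u * (1 - (-1) * (b * e - 1)) = 1" unfolding in_jac_iff by blast
  then have ube: "u * b * e = 1" by (simp add: mult.assoc)
  have "e = u * b * e * e" using ube by simp
  also have "\<dots> = u * b * e" by (simp add: mult.assoc idem)
  finally show ?thesis using ube by simp
qed

function causal_solution :: "('a \<Rightarrow> 'b) \<Rightarrow> ((nat \<Rightarrow> 'a) \<Rightarrow> nat \<Rightarrow> 'b) \<Rightarrow> nat \<Rightarrow> 'a" where
  "causal_solution L F n =
     (SOME r. L r = F (\<lambda>k. if k < n then causal_solution L F k else undefined) n)"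
  by auto
termination by (relation "measure (\<lambda>(L, F, n). n)") auto

lemma causal_solution_eq:
  assumes "surj L"
    and causal: "\<And>z z' n. (\<And>k. k < n \<Longrightarrow> z k = z' k) \<Longrightarrow> F z n = F z' n"
  shows "L (causal_solution L F n) = F (causal_solution L F) n"
proof -
  let ?prefix = "\<lambda>k. if k < n then causal_solution L F k else undefined"
  have "L (causal_solution L F n) = F ?prefix n"
    unfolding causal_solution.simps[of L F n]
    by (rule someI_ex) (metis assms(1) surjD)
  also have "\<dots> = F (causal_solution L F) n"
    by (rule causal) simp
  finally show ?thesis .
qed

text \<open>The n-th coefficient of Z * u - v * Z is z_n * u_0 - v_0 * z_n plus terms involving only
  coefficients of Z below n, so Z can be found coefficient by coefficient.\<close>
lemma fps_sylvester_causal_solvable: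
  fixes u v :: "'a::ring_1 fps" and N :: "'a fps \<Rightarrow> 'a fps"
  assumes surj: "surj (\<lambda>r. r * u$0 - v$0 * r)"
    and causal: "\<And>Z Z' n. (\<And>k. k < n \<Longrightarrow> Z$k = Z'$k) \<Longrightarrow> N Z $ n = N Z' $ n"
  shows "\<exists>Z. Z * u - v * Z = N Z"
proof -
  define F where "F = (\<lambda>z n. N (Abs_fps z) $ n - (\<Sum>i<n. z i * u$(n - i))
                                + (\<Sum>i\<in>{1..n}. v$i * z (n - i)))"
  define z where "z = causal_solution (\<lambda>r. r * u$0 - v$0 * r) F"
  have F_causal: "F y n = F y' n" if "\<And>k. k < n \<Longrightarrow> y k = y' k" for y y' n
  proof -
    have "N (Abs_fps y) $ n = N (Abs_fps y') $ n" by (rule causal) (simp add: that)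
    moreover have "(\<Sum>i<n. y i * u$(n - i)) = (\<Sum>i<n. y' i * u$(n - i))"
      by (rule sum.cong) (auto simp: that)
    moreover have "(\<Sum>i\<in>{1..n}. v$i * y (n - i)) = (\<Sum>i\<in>{1..n}. v$i * y' (n - i))"
      by (rule sum.cong) (auto simp: that)
    ultimately show ?thesis by (simp add: F_def)
  qed
  have z: "z n * u$0 - v$0 * z n = F z n" for n
    unfolding z_def by (rule causal_solution_eq[OF surj F_causal])
  show ?thesis
  proof (intro exI fps_ext)
    fix n
    have "(Abs_fps z * u) $ n = (\<Sum>i<n. z i * u$(n - i)) + z n * u$0"
      by (simp add: fps_mult_nth atLeast0AtMost lessThan_Suc_atMost[symmetric])
    moreover have "(v * Abs_fps z) $ n = v$0 * z n + (\<Sum>i\<in>{1..n}. v$i * z (n - i))"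
      by (simp add: fps_mult_nth sum.atLeast_Suc_atMost)
    ultimately show "(Abs_fps z * u - v * Abs_fps z) $ n = N (Abs_fps z) $ n"
      using z[of n] by (simp add: F_def algebra_simps)
  qed
qed

lemma fps_mult_nth_eq_0_if_low_left:
  fixes p w :: "'a::ring_1 fps"
  assumes "\<And>k. k \<le> n \<Longrightarrow> p$k = 0"
  shows "(p * w) $ n = 0"
  unfolding fps_mult_nth using assms by (auto intro!: sum.neutral)

lemma fps_mult_nth_eq_0_if_low_shift:
  fixes q d :: "'a::ring_1 fps"
  assumes "q$0 = 0" and "\<And>k. k < n \<Longrightarrow> d$k = 0"
  shows "(q * d) $ n = 0"
  unfolding fps_mult_nth
proof (intro sum.neutral ballI)
  fix i assume "i \<in> {0..n}"
  then show "q$i * d$(n - i) = 0"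
    using assms by (cases "i = 0") auto
qed

lemma fps_riccati_solvable:
  fixes u v g q b :: "'a::ring_1 fps"
  assumes surj: "surj (\<lambda>r. r * u$0 - v$0 * r)" and q0: "q$0 = 0"
  shows "\<exists>Z. Z * u - v * Z = g - q * Z * b * Z"
proof (rule fps_sylvester_causal_solvable[OF surj])
  fix Z Z' :: "'a fps" and n
  assume agree: "\<And>k. k < n \<Longrightarrow> Z$k = Z'$k"
  have low: "(q * (Z - Z')) $ k = 0" if "k \<le> n" for k
    by (rule fps_mult_nth_eq_0_if_low_shift) (use q0 agree that in auto)
  have "q * Z * b * Z - q * Z' * b * Z' = q * (Z - Z') * (b * Z) + q * Z' * b * (Z - Z')"
    by (simp add: algebra_simps)
  moreover have "(q * (Z - Z') * (b * Z)) $ n = 0"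
    by (rule fps_mult_nth_eq_0_if_low_left) (use low in auto)
  moreover have "(q * Z' * b * (Z - Z')) $ n = 0"
    by (rule fps_mult_nth_eq_0_if_low_shift) (use q0 agree in simp_all)
  ultimately have "(q * Z * b * Z - q * Z' * b * Z') $ n = 0" by simp
  then show "(g - q * Z * b * Z) $ n = (g - q * Z' * b * Z') $ n"
    by (simp add: algebra_simps)
qed

lemma m2_mul_simps [simp]:
  "m2_mul s (a, b, c, d) (a', b', c', d') =
     (a * a' + s^2 * b * c', a * b' + b * d', c * a' + d * c', s^2 * c * b' + d * d')"
  by (simp add: m2_mul_def)

lemma m2_sub_simps [simp]: "m2_sub (a, b, c, d) (a', b', c', d') = (a - a', b - b', c - c', d - d')"
  by (simp add: m2_sub_def)

lemma m2_mul_assoc: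
  fixes s :: "'a::ring_1"
  assumes central: "\<And>t. s * t = t * s"
  shows "m2_mul s (m2_mul s X Y) Z = m2_mul s X (m2_mul s Y Z)"
proof -
  have s2: "t * (s^2 * u) = s^2 * (t * u)" for t u
    by (metis central mult.assoc power2_eq_square)
  show ?thesis
    by (cases X; cases Y; cases Z) (simp add: algebra_simps s2)
qed

lemma m2_one_mul [simp]: "m2_mul s m2_one X = X"
  and m2_mul_one [simp]: "m2_mul s X m2_one = X"
  by (cases X; simp add: m2_one_def)+

definition m2_swap :: "'a m2 \<Rightarrow> 'a m2" where
  "m2_swap X = (case X of (a, b, c, d) \<Rightarrow> (d, c, b, a))"

lemma m2_swap_simps [simp]: "m2_swap (a, b, c, d) = (d, c, b, a)"
  by (simp add: m2_swap_def)

lemma m2_swap_mul: "m2_swap (m2_mul s X Y) = m2_mul s (m2_swap X) (m2_swap Y)"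
  by (cases X; cases Y) (simp add: algebra_simps)

lemma m2_at0_simps [simp]: "m2_at0 (a, b, c, d) = (a$0, b$0, c$0, d$0)"
  by (simp add: m2_at0_def)

lemma m2_at0_mul:
  fixes s :: "'a::ring_1 fps"
  assumes "s$0 = 0"
  shows "m2_at0 (m2_mul s X Y) = m2_mul 0 (m2_at0 X) (m2_at0 Y)"
  using assms by (cases X; cases Y) (simp add: power2_eq_square)

lemma m2_at0_sub: "m2_at0 (m2_sub X Y) = m2_sub (m2_at0 X) (m2_at0 (Y::'a::ring_1 fps m2))"
  by (cases X; cases Y) simp

lemma m2_at0_one [simp]: "m2_at0 (m2_one::'a::ring_1 fps m2) = m2_one"
  by (simp add: m2_one_def)

lemma m2_at0_jac:
  fixes s :: "'a::ring_1 fps"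
  assumes s0: "s$0 = 0" and X: "X \<in> jac_gen m2_sub (m2_mul s) m2_one"
  shows "m2_at0 X \<in> jac_gen m2_sub (m2_mul 0) m2_one"
  unfolding jac_gen_def
proof (intro CollectI allI)
  fix r :: "'a m2"
  obtain r1 r2 r3 r4 where r: "r = (r1, r2, r3, r4)" by (cases r)
  define R where "R = (fps_const r1, fps_const r2, fps_const r3, fps_const r4)"
  have R: "m2_at0 R = r" by (simp add: r R_def)
  obtain u where "m2_mul s u (m2_sub m2_one (m2_mul s R X)) = m2_one"
    using X unfolding jac_gen_def by blast
  then have "m2_at0 (m2_mul s u (m2_sub m2_one (m2_mul s R X))) = m2_one" by simp
  then have "m2_mul 0 (m2_at0 u) (m2_sub m2_one (m2_mul 0 r (m2_at0 X))) = m2_one"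
    by (simp add: m2_at0_mul[OF s0] m2_at0_sub R)
  then show "\<exists>u. m2_mul 0 u (m2_sub m2_one (m2_mul 0 r (m2_at0 X))) = m2_one" by blast
qed

lemma m2_jac_diagonal_in_jac:
  fixes s :: "'a::ring_1"
  assumes "(a, b, c, d) \<in> jac_gen m2_sub (m2_mul s) m2_one"
  shows "a \<in> jac" and "d \<in> jac"
proof -
  show "a \<in> jac" unfolding in_jac_iff
  proof
    fix r
    obtain u where "m2_mul s u (m2_sub m2_one (m2_mul s (r, 0, 0, 0) (a, b, c, d))) = m2_one"
      using assms unfolding jac_gen_def by blast
    then show "\<exists>u. u * (1 - r * a) = 1" by (cases u) (auto simp: m2_one_def)
  qed
  show "d \<in> jac" unfolding in_jac_iff
  proof
    fix r
    obtain u where "m2_mul s u (m2_sub m2_one (m2_mul s (0, 0, 0, r) (a, b, c, d))) = m2_one"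
      using assms unfolding jac_gen_def by blast
    then show "\<exists>u. u * (1 - r * d) = 1" by (cases u) (auto simp: m2_one_def)
  qed
qed

text \<open>Row reduction: clear the lower left entry, then invert the resulting triangular matrix.\<close>
lemma m2_fps_left_invertible:
  fixes s :: "'a::ring_1 fps"
  assumes s0: "s$0 = 0" and central: "\<And>t. s * t = t * s"
    and w1: "w1 * Y1$0 = 1" and w4: "w4 * Y4$0 = 1"
  shows "\<exists>U. m2_mul s U (Y1, Y2, Y3, Y4) = m2_one"
proof -
  define I1 where "I1 = fps_left_inverse Y1 w1"
  define D where "D = Y4 - s^2 * (Y3 * I1) * Y2"
  define I4 where "I4 = fps_left_inverse D w4"
  have I1: "I1 * Y1 = 1" unfolding I1_def by (rule fps_left_inverse[OF w1])
  have "D$0 = Y4$0" using s0 by (simp add: D_def power2_eq_square)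
  then have I4: "I4 * D = 1" unfolding I4_def using w4 by (simp add: fps_left_inverse)
  have lower: "m2_mul s (1, 0, - (Y3 * I1), 1) (Y1, Y2, Y3, Y4) = (Y1, Y2, 0, D)"
    by (simp add: D_def mult.assoc I1)
  have upper: "m2_mul s (I1, - (I1 * Y2 * I4), 0, I4) (Y1, Y2, 0, D) = m2_one"
    by (simp add: m2_one_def I1 I4 mult.assoc)
  show ?thesis
    using lower upper by (metis m2_mul_assoc[OF central])
qed

lemma m2_fps_in_jac:
  fixes s :: "'a::ring_1 fps"
  assumes s0: "s$0 = 0" and central: "\<And>t. s * t = t * s"
    and "X1$0 \<in> jac" and "X4$0 \<in> jac"
  shows "(X1, X2, X3, X4) \<in> jac_gen m2_sub (m2_mul s) m2_one"
  unfolding jac_gen_def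
proof (intro CollectI allI)
  fix R :: "'a fps m2"
  obtain r1 r2 r3 r4 where R: "R = (r1, r2, r3, r4)" by (cases R)
  obtain w1 where w1: "w1 * (1 - r1$0 * X1$0) = 1" using assms(3) by (auto simp: in_jac_iff)
  obtain w4 where w4: "w4 * (1 - r4$0 * X4$0) = 1" using assms(4) by (auto simp: in_jac_iff)
  have diff: "m2_sub m2_one (m2_mul s R (X1, X2, X3, X4)) =
     (1 - (r1 * X1 + s^2 * r2 * X3), 0 - (r1 * X2 + r2 * X4),
      0 - (r3 * X1 + r4 * X3), 1 - (s^2 * r3 * X2 + r4 * X4))"
    by (simp add: R m2_one_def)
  show "\<exists>U. m2_mul s U (m2_sub m2_one (m2_mul s R (X1, X2, X3, X4))) = m2_one"
    unfolding diff by (rule m2_fps_left_invertible[OF s0 central])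
      (use w1 w4 s0 in \<open>simp_all add: power2_eq_square\<close>)
qed

lemma conjugate_commuting_idempotent:
  assumes assoc: "\<And>X Y Z. M (M X Y) Z = M X (M Y Z)"
    and one: "\<And>X. M one X = X" "\<And>X. M X one = X"
    and inv: "M W Wi = one" "M Wi W = one"
    and idem: "M P P = P" and comm: "M P D = M D P"
    and similar: "M A W = M W D"
  shows "M (M W (M P Wi)) (M W (M P Wi)) = M W (M P Wi)"
    and "M A (M W (M P Wi)) = M (M W (M P Wi)) A"
proof -
  have cancel: "M Wi (M W X) = X" for X by (simp add: assoc[symmetric] inv one)
  have A: "A = M W (M D Wi)"
    by (metis assoc inv(1) one(2) similar)
  show "M (M W (M P Wi)) (M W (M P Wi)) = M W (M P Wi)"
    by (simp add: assoc cancel) (simp add: assoc[symmetric] idem)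
  show "M A (M W (M P Wi)) = M (M W (M P Wi)) A"
    by (subst (1 2) A) (simp add: assoc cancel, simp add: assoc[symmetric] comm)
qed

lemma surj_uminus_comp:
  fixes f :: "'a \<Rightarrow> 'b::group_add"
  shows "surj f \<Longrightarrow> surj (\<lambda>r. - f r)"
  by (metis minus_minus surj_def)

lemma fps_riccati_sylvester_solvable:
  fixes s :: "'a::ring_1 fps"
  assumes wb: "weakly_bleached TYPE('a)" and s0: "s$0 = 0"
    and al: "al$0 - 1 \<in> jac" and de: "de$0 \<in> jac"
  shows "\<exists>Z Y. Z * al - de * Z = ga - s^2 * Z * be * Z
    \<and> Y * (de - s^2 * Z * be) - (al + s^2 * be * Z) * Y = be"
proof -
  have bleach: "surj (\<lambda>r. al$0 * r - r * de$0)" "surj (\<lambda>r. de$0 * r - r * al$0)"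
    using wb al de unfolding weakly_bleached_def by blast+
  have "surj (\<lambda>r. r * al$0 - de$0 * r)"
    using surj_uminus_comp[OF bleach(2)] by (simp add: algebra_simps)
  moreover have "(s^2)$0 = 0" using s0 by (simp add: power2_eq_square)
  ultimately obtain Z where "Z * al - de * Z = ga - s^2 * Z * be * Z"
    using fps_riccati_solvable by blast
  moreover have "surj (\<lambda>r. r * (de - s^2 * Z * be)$0 - (al + s^2 * be * Z)$0 * r)"
    using surj_uminus_comp[OF bleach(1)] s0 by (simp add: algebra_simps power2_eq_square)
  then obtain Y where "Y * (de - s^2 * Z * be) - (al + s^2 * be * Z) * Y = be"
    using fps_sylvester_causal_solvable[where N = "\<lambda>_. be"] by blast
  ultimately show ?thesis by blast
qed

text \<open>The solutions Z, Y above conjugate A into diag(al', de') by W = [1 0; Z 1] * [1 Y; 0 1];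
  the idempotent is W * diag(1, 0) * W^-1.\<close>
lemma m2_fps_commuting_idempotent_1_0:
  fixes s :: "'a::ring_1 fps"
  assumes wb: "weakly_bleached TYPE('a)" and s0: "s$0 = 0" and central: "\<And>t. s * t = t * s"
    and al: "al$0 - 1 \<in> jac" and de: "de$0 \<in> jac"
  shows "\<exists>E1 E2 E3 E4. m2_mul s (E1, E2, E3, E4) (E1, E2, E3, E4) = (E1, E2, E3, E4)
     \<and> m2_mul s (al, be, ga, de) (E1, E2, E3, E4) = m2_mul s (E1, E2, E3, E4) (al, be, ga, de)
     \<and> E1$0 = 1 \<and> E4$0 = 0"
proof -
  have s2: "t * (s^2 * u) = s^2 * (t * u)" for t u
    by (metis central mult.assoc power2_eq_square)
  obtain Z Y where Z: "Z * al - de * Z = ga - s^2 * Z * be * Z"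
    and Y: "Y * (de - s^2 * Z * be) - (al + s^2 * be * Z) * Y = be"
    using fps_riccati_sylvester_solvable[OF wb s0 al de] by blast
  define al' where "al' = al + s^2 * be * Z"
  define de' where "de' = de - s^2 * Z * be"
  define M where "M = m2_mul s"
  define L :: "'a fps m2" where "L = (1, 0, Z, 1)"
  define V :: "'a fps m2" where "V = (1, Y, 0, 1)"
  define W where "W = M L V"
  define Wi where "Wi = M (1, - Y, 0, 1) (1, 0, - Z, 1)"
  define D :: "'a fps m2" where "D = (al', 0, 0, de')"
  define P :: "'a fps m2" where "P = (1, 0, 0, 0)"
  have assoc: "M (M X X') X'' = M X (M X' X'')" for X X' X''
    unfolding M_def by (rule m2_mul_assoc[OF central])
  have "ga + de * Z = Z * al + s^2 * Z * be * Z" using Z by (simp add: algebra_simps)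
  then have triangular: "M (al, be, ga, de) L = M L (al', be, 0, de')"
    unfolding M_def L_def al'_def de'_def by (simp add: algebra_simps s2)
  have diagonal: "M (al', be, 0, de') V = M V D"
    unfolding M_def V_def D_def al'_def de'_def using Y by (simp add: algebra_simps)
  have similar: "M (al, be, ga, de) W = M W D"
    unfolding W_def by (simp add: assoc[symmetric] triangular) (simp add: assoc diagonal)
  have inv: "M W Wi = m2_one" "M Wi W = m2_one"
    unfolding W_def Wi_def M_def L_def V_def by (simp_all add: m2_one_def algebra_simps s2)
  define E where "E = M W (M P Wi)"
  have idem: "M E E = E" and comm: "M (al, be, ga, de) E = M E (al, be, ga, de)"
    unfolding E_def
    by (rule conjugate_commuting_idempotent[where D = D, OF assoc _ _ inv _ _ similar];
        simp add: M_def P_def D_def)+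
  obtain E1 E2 E3 E4 where E: "E = (E1, E2, E3, E4)" by (cases E)
  have "E = (1 + s^2 * Y * Z, - Y, Z + s^2 * Z * Y * Z, - (s^2 * Z * Y))"
    unfolding E_def W_def Wi_def M_def L_def V_def P_def by (simp add: algebra_simps s2)
  then have "E1$0 = 1" "E4$0 = 0" using s0 by (auto simp: E power2_eq_square)
  with idem comm show ?thesis unfolding E M_def by blast
qed

lemma m2_fps_commuting_idempotent:
  fixes s :: "'a::ring_1 fps"
  assumes wb: "weakly_bleached TYPE('a)" and s0: "s$0 = 0" and central: "\<And>t. s * t = t * s"
    and e: "e = 0 \<or> e = 1" and h: "h = 0 \<or> h = 1"
    and al: "al$0 - e \<in> jac" and de: "de$0 - h \<in> jac"
  shows "\<exists>E1 E2 E3 E4. m2_mul s (E1, E2, E3, E4) (E1, E2, E3, E4) = (E1, E2, E3, E4)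
     \<and> m2_mul s (al, be, ga, de) (E1, E2, E3, E4) = m2_mul s (E1, E2, E3, E4) (al, be, ga, de)
     \<and> E1$0 = e \<and> E4$0 = h"
proof -
  consider "e = 0" "h = 0" | "e = 1" "h = 1" | "e = 1" "h = 0" | "e = 0" "h = 1"
    using e h by blast
  then show ?thesis
  proof cases
    case 1
    then show ?thesis by (intro exI[of _ 0]) simp
  next
    case 2
    then show ?thesis by (intro exI[of _ 1] exI[of _ 0]) simp
  next
    case 3
    then show ?thesis using m2_fps_commuting_idempotent_1_0[OF wb s0 central] al de by simp
  next
    case 4
    then obtain E1 E2 E3 E4 where
      idem: "m2_mul s (E1, E2, E3, E4) (E1, E2, E3, E4) = (E1, E2, E3, E4)" and
      comm: "m2_mul s (de, ga, be, al) (E1, E2, E3, E4) =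
             m2_mul s (E1, E2, E3, E4) (de, ga, be, al)"
      and "E1$0 = 1" "E4$0 = 0"
      using m2_fps_commuting_idempotent_1_0[OF wb s0 central, of de al ga be] al de by auto
    moreover have "m2_mul s (E4, E3, E2, E1) (E4, E3, E2, E1) = (E4, E3, E2, E1)"
      using arg_cong[OF idem, of m2_swap] unfolding m2_swap_mul m2_swap_simps .
    moreover have
      "m2_mul s (al, be, ga, de) (E4, E3, E2, E1) = m2_mul s (E4, E3, E2, E1) (al, be, ga, de)"
      using arg_cong[OF comm, of m2_swap] unfolding m2_swap_mul m2_swap_simps .
    ultimately show ?thesis using 4 by blast
  qed
qed

lemma strongly_J_clean_m2_at0:
  fixes s :: "'a::ring_1 fps"
  assumes s0: "s$0 = 0" and "strongly_J_clean_m2 s A"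
  shows "strongly_J_clean_m2 0 (m2_at0 A)"
proof -
  obtain E where "m2_mul s E E = E" "m2_mul s A E = m2_mul s E A"
    and "m2_sub A E \<in> jac_gen m2_sub (m2_mul s) m2_one"
    using assms(2) unfolding strongly_J_clean_m2_def strongly_J_clean_gen_def by blast
  then have "m2_mul 0 (m2_at0 E) (m2_at0 E) = m2_at0 E"
    and "m2_mul 0 (m2_at0 A) (m2_at0 E) = m2_mul 0 (m2_at0 E) (m2_at0 A)"
    and "m2_sub (m2_at0 A) (m2_at0 E) \<in> jac_gen m2_sub (m2_mul 0) m2_one"
    by (metis m2_at0_mul[OF s0] m2_at0_sub m2_at0_jac[OF s0])+
  then show ?thesis
    unfolding strongly_J_clean_m2_def strongly_J_clean_gen_def by blast
qed

lemma strongly_J_clean_m2_lift: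
  fixes s :: "'a::ring_1 fps"
  assumes wb: "weakly_bleached TYPE('a)" and s0: "s$0 = 0" and central: "\<And>t. s * t = t * s"
    and "strongly_J_clean_m2 0 (m2_at0 A)"
  shows "strongly_J_clean_m2 s A"
proof -
  obtain al be ga de where A: "A = (al, be, ga, de)" by (cases A)
  obtain e f g h where "m2_mul 0 (e, f, g, h) (e, f, g, h) = (e, f, g, h)"
    and J0: "m2_sub (m2_at0 A) (e, f, g, h) \<in> jac_gen m2_sub (m2_mul 0) m2_one"
    using assms(4) unfolding strongly_J_clean_m2_def strongly_J_clean_gen_def by force
  then have "e * e = e" "h * h = h" by simp_all
  then have e: "e = 0 \<or> e = 1" and h: "h = 0 \<or> h = 1"
    using local_ring_idempotent_cases wb unfolding weakly_bleached_def by blast+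
  have corners: "al$0 - e \<in> jac" "de$0 - h \<in> jac"
    using m2_jac_diagonal_in_jac J0 by (simp_all add: A)
  then obtain E1 E2 E3 E4 where
    "m2_mul s (E1, E2, E3, E4) (E1, E2, E3, E4) = (E1, E2, E3, E4)"
    "m2_mul s A (E1, E2, E3, E4) = m2_mul s (E1, E2, E3, E4) A"
    and E0: "E1$0 = e" "E4$0 = h"
    using m2_fps_commuting_idempotent[OF wb s0 central e h] unfolding A by blast
  moreover have "m2_sub A (E1, E2, E3, E4) \<in> jac_gen m2_sub (m2_mul s) m2_one"
    unfolding A m2_sub_simps
    by (rule m2_fps_in_jac[OF s0 central]) (simp_all add: E0 corners)
  ultimately show ?thesis
    unfolding strongly_J_clean_m2_def strongly_J_clean_gen_def by blast
qed

theorem theorem2p18: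
  fixes s :: "'a::ring_1 fps" and A :: "'a fps m2"
  assumes "weakly_bleached TYPE('a)"
    and "fps_nth s 0 = 0"
    and "\<forall>t. s * t = t * s"
    and "s \<in> jac"
  shows "strongly_J_clean_m2 s A \<longleftrightarrow> strongly_J_clean_m2 (fps_nth s 0) (m2_at0 A)"
proof -
  have central: "\<And>t. s * t = t * s" using assms(3) by blast
  show ?thesis
    unfolding assms(2)
    using strongly_J_clean_m2_at0[OF assms(2)] strongly_J_clean_m2_lift[OF assms(1,2) central]
    by blast
qed

end
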